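(* Let $n\ge 2$, and let $L=(\ell_1,\dots,\ell_n)\in\mathbb{Z}^n$ and $K=(k_1,\dots,k_n)\in\mathbb{Z}^n$ with $0<k_i<\ell_i$ for each $1\le i\le n$. Let $\tau=\prod_{i=1}^n\ell_i$, $\kappa=\prod_{i=1}^n k_i$, $G=\mathbb{Z}_{\tau-\kappa}$, and assume that $k_i$ is invertible in the ring $G$ for each $2\le i\le n$. Define $\beta_1=1$ and $\beta_{i+1}=k_{i+1}^{-1}\ell_i\beta_i$ for $1\le i\le n-1$ (computed in $G$). Then $\mathcal{S}_{L,K}$ splits $G$ with the splitting sequence $\beta=\beta_1,\dots,\beta_n$.
   Context: For integer vectors $L,K$ with $0<k_i<\ell_i$, the discrete $n$-dimensional chair is $\mathcal{S}_{L,K}=\{(x_1,\dots,x_n)\in\mathbb{Z}^n: 0\le x_i<\ell_i \text{ for all } i, \text{ and there exists } j \text{ with } x_j<\ell_j-k_j\}$; it has $\prod\ell_i-\prod k_i$ elements. $\mathbb{Z}_m$ denotes the ring of integers modulo $m$. For an Abelian group $G$, a sequence $\beta=\beta_1,\dots,\beta_n$ of elements of $G$, and $X=(x_1,\dots,x_n)\in\mathbb{Z}^n$, set $X\cdot\beta=\sum_{i=1}^n x_i\beta_i\in G$. A finite set $\mathcal{S}\subset\mathbb{Z}^n$ splits $G$ with splitting sequence $\beta$ if the set $\{\mathcal{E}\cdot\beta:\mathcal{E}\in\mathcal{S}\}$ consists of $|\mathcal{S}|$ distinct elements of $G$. *)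

theory Defs
  imports "HOL-Number_Theory.Number_Theory"
begin

text \<open>Points of \<int>^n are represented as functions nat \<Rightarrow> int, indexed by 1..n,
  and equal to 0 outside {1..n}.\<close>

definition chair :: "nat \<Rightarrow> (nat \<Rightarrow> int) \<Rightarrow> (nat \<Rightarrow> int) \<Rightarrow> (nat \<Rightarrow> int) set" where
  "chair n L K = {X. (\<forall>i. i \<notin> {1..n} \<longrightarrow> X i = 0) \<and>
                     (\<forall>i\<in>{1..n}. 0 \<le> X i \<and> X i < L i) \<and>
                     (\<exists>j\<in>{1..n}. X j < L j - K j)}"

text \<open>Elements of \<int>_m are represented by integers (residues mod m).
  X \<cdot> \<beta> computed in \<int>_m is the residue of the integer sum.\<close>

definition dotG :: "int \<Rightarrow> nat \<Rightarrow> (nat \<Rightarrow> int) \<Rightarrow> (nat \<Rightarrow> int) \<Rightarrow> int" where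
  "dotG m n X \<beta> = (\<Sum>i=1..n. X i * \<beta> i) mod m"

text \<open>S splits \<int>_m with splitting sequence \<beta>: the values X\<cdot>\<beta> (X \<in> S) are |S| distinct
  elements of \<int>_m, i.e. the map X \<mapsto> X\<cdot>\<beta> is injective on S.\<close>

definition splits :: "(nat \<Rightarrow> int) set \<Rightarrow> int \<Rightarrow> nat \<Rightarrow> (nat \<Rightarrow> int) \<Rightarrow> bool" where
  "splits S m n \<beta> \<longleftrightarrow> finite S \<and> card ((\<lambda>X. dotG m n X \<beta>) ` S) = card S"

text \<open>beta_aux j = \<beta>_(j+1):  \<beta>_1 = 1,  \<beta>_(i+1) = k_(i+1)^(-1) * l_i * \<beta>_i  in \<int>_m.\<close>

primrec beta_aux :: "int \<Rightarrow> (nat \<Rightarrow> int) \<Rightarrow> (nat \<Rightarrow> int) \<Rightarrow> nat \<Rightarrow> int" where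
  "beta_aux m L K 0 = 1 mod m"
| "beta_aux m L K (Suc j) =
     (modular_inverse m (K (Suc (Suc j))) * L (Suc j) * beta_aux m L K j) mod m"

definition beta :: "int \<Rightarrow> (nat \<Rightarrow> int) \<Rightarrow> (nat \<Rightarrow> int) \<Rightarrow> nat \<Rightarrow> int" where
  "beta m L K i = beta_aux m L K (i - 1)"

end

theory Submission
  imports Defs
begin

text \<open>
  Multiplying by the unit \<open>k\<^sub>2 \<cdots> k\<^sub>n\<close> turns the splitting sequence into the integer weights
  \<open>w i = l 1 \<cdots> l (i-1) \<cdot> k (i+1) \<cdots> k n\<close>, which satisfy \<open>l i \<cdot> w i = k (i+1) \<cdot> w (i+1)\<close>.
  If two points \<open>X, Y\<close> of the chair have the same image, then
  \<open>\<Sum> (X i - Y i) \<cdot> w i = t \<cdot> (\<tau> - \<kappa>)\<close>. Since each prefix product \<open>l 1 \<cdots> l i\<close> is coprime to the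
  suffix product \<open>k (i+1) \<cdots> k n\<close>, the partial sums can be divided out, giving carries
  \<open>a j\<close> with \<open>X j - Y j = l j \<cdot> a j - k j \<cdot> a (j-1)\<close> and \<open>a 0 = a n = t\<close>.
  As \<open>X j - Y j < l j\<close>, a positive carry never decreases when moving backwards, so around the
  cycle it would be constant, which is impossible at a coordinate with \<open>X j < l j - k j\<close>.
  By symmetry all carries vanish, hence \<open>X = Y\<close>.
\<close>

definition chair_weight :: "(nat \<Rightarrow> int) \<Rightarrow> (nat \<Rightarrow> int) \<Rightarrow> nat \<Rightarrow> nat \<Rightarrow> int" where
  "chair_weight L K n i = (\<Prod>j=1..i-1. L j) * (\<Prod>j=Suc i..n. K j)"

lemma L_mult_chair_weight:
  assumes "1 \<le> i"
  shows "L i * chair_weight L K n i = (\<Prod>j=1..i. L j) * (\<Prod>j=Suc i..n. K j)"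
  using assms prod.cl_ivl_Suc[of L 1 "i - 1"] by (simp add: chair_weight_def)

lemma K_mult_chair_weight:
  assumes "1 \<le> i" "i \<le> n"
  shows "K i * chair_weight L K n i = (\<Prod>j=1..i-1. L j) * (\<Prod>j=i..n. K j)"
  using assms prod.atLeast_Suc_atMost[of i n K] by (simp add: chair_weight_def)

lemma chair_weight_step:
  assumes "1 \<le> i" "i < n"
  shows "L i * chair_weight L K n i = K (Suc i) * chair_weight L K n (Suc i)"
  using assms L_mult_chair_weight[of i L K n] K_mult_chair_weight[of "Suc i" n K L] by simp

lemma beta_mult_cong_chair_weight:
  fixes L K :: "nat \<Rightarrow> int"
  assumes units: "\<forall>i\<in>{2..n}. coprime (K i) m" and "1 \<le> i" "i \<le> n"
  shows "[beta m L K i * (\<Prod>j=2..n. K j) = chair_weight L K n i] (mod m)"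
proof -
  have "[beta_aux m L K j * (\<Prod>j=2..n. K j) = chair_weight L K n (Suc j)] (mod m)" if "Suc j \<le> n" for j
    using that
  proof (induction j)
    case 0
    show ?case by (simp add: chair_weight_def numeral_2_eq_2 cong_def mod_mult_left_eq)
  next
    case (Suc j)
    define v where "v = modular_inverse m (K (Suc (Suc j)))"
    have "[beta_aux m L K (Suc j) * (\<Prod>j=2..n. K j)
            = v * L (Suc j) * (beta_aux m L K j * (\<Prod>j=2..n. K j))] (mod m)"
      by (simp add: v_def cong_def mod_mult_left_eq mult.assoc)
    also have "[v * L (Suc j) * (beta_aux m L K j * (\<Prod>j=2..n. K j))
                = v * L (Suc j) * chair_weight L K n (Suc j)] (mod m)"
      using Suc by (intro cong_mult cong_refl) simp
    also have "v * L (Suc j) * chair_weight L K n (Suc j) = v * K (Suc (Suc j)) * chair_weight L K n (Suc (Suc j))"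
      using chair_weight_step[of "Suc j" n L K] Suc.prems by (simp add: mult.assoc)
    also have "[v * K (Suc (Suc j)) * chair_weight L K n (Suc (Suc j)) = 1 * chair_weight L K n (Suc (Suc j))] (mod m)"
      using units Suc.prems unfolding v_def by (intro cong_mult cong_modular_inverse2) auto
    finally show ?case by simp
  qed
  from this[of "i - 1"] show ?thesis
    using assms by (simp add: beta_def)
qed

lemma dot_beta_mult_cong_chair_weight:
  fixes L K X :: "nat \<Rightarrow> int"
  assumes units: "\<forall>i\<in>{2..n}. coprime (K i) m"
  shows "[(\<Sum>i=1..n. X i * beta m L K i) * (\<Prod>j=2..n. K j) = (\<Sum>i=1..n. X i * chair_weight L K n i)] (mod m)"
  unfolding sum_distrib_right mult.assoc
  using beta_mult_cong_chair_weight[OF units] by (intro cong_sum cong_mult cong_refl) auto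

lemma coprime_prefix_suffix:
  fixes L K :: "nat \<Rightarrow> int"
  assumes units: "\<forall>i\<in>{2..n}. coprime (K i) ((\<Prod>j=1..n. L j) - (\<Prod>j=1..n. K j))"
    and "1 \<le> i"
  shows "coprime (\<Prod>j=1..i. L j) (\<Prod>j=Suc i..n. K j)"
proof (intro prod_coprime_right)
  fix b assume b: "b \<in> {Suc i..n}"
  then have "K b dvd (\<Prod>j=1..n. K j)"
    using \<open>1 \<le> i\<close> by (intro dvd_prodI) auto
  then have "[(\<Prod>j=1..n. L j) - (\<Prod>j=1..n. K j) = (\<Prod>j=1..n. L j)] (mod K b)"
    by (simp add: cong_iff_dvd_diff)
  moreover have "coprime ((\<Prod>j=1..n. L j) - (\<Prod>j=1..n. K j)) (K b)"
    using units b \<open>1 \<le> i\<close> by (simp add: coprime_commute)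
  ultimately have "coprime (\<Prod>j=1..n. L j) (K b)"
    by (rule cong_imp_coprime)
  moreover have "(\<Prod>j=1..i. L j) dvd (\<Prod>j=1..n. L j)"
    using b by (intro prod_dvd_prod_subset) auto
  ultimately show "coprime (\<Prod>j=1..i. L j) (K b)"
    by (meson coprime_divisors dvd_refl)
qed

lemma partial_chair_weight_sum_dvd:
  fixes d L K :: "nat \<Rightarrow> int"
  assumes coprime: "\<And>i. 1 \<le> i \<Longrightarrow> coprime (\<Prod>j=1..i. L j) (\<Prod>j=Suc i..n. K j)"
    and sum: "(\<Sum>j=1..n. d j * chair_weight L K n j) = ((\<Prod>j=1..n. L j) - (\<Prod>j=1..n. K j)) * t"
    and "i \<le> n"
  shows "(\<Prod>j=1..i. L j) * (\<Prod>j=Suc i..n. K j)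
           dvd t * (\<Prod>j=1..n. K j) + (\<Sum>j=1..i. d j * chair_weight L K n j)"
    (is "?P * ?S dvd ?A")
proof -
  have "?S dvd ?A"
  proof (intro dvd_add dvd_sum)
    show "?S dvd t * (\<Prod>j=1..n. K j)"
      by (intro dvd_mult prod_dvd_prod_subset) auto
    fix j assume "j \<in> {1..i}"
    then have "?S dvd (\<Prod>j=Suc j..n. K j)"
      by (intro prod_dvd_prod_subset) auto
    then show "?S dvd d j * chair_weight L K n j"
      by (simp add: chair_weight_def)
  qed
  moreover have "?P dvd ?A"
  proof -
    have "{1..n} = {1..i} \<union> {Suc i..n}"
      using \<open>i \<le> n\<close> by auto
    then have "?A = t * (\<Prod>j=1..n. L j) - (\<Sum>j=Suc i..n. d j * chair_weight L K n j)"
      using sum by (simp add: sum.union_disjoint algebra_simps)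
    moreover have "?P dvd (\<Sum>j=Suc i..n. d j * chair_weight L K n j)"
    proof (intro dvd_sum)
      fix j assume "j \<in> {Suc i..n}"
      then have "?P dvd (\<Prod>j=1..j-1. L j)"
        by (intro prod_dvd_prod_subset) auto
      then show "?P dvd d j * chair_weight L K n j"
        by (simp add: chair_weight_def)
    qed
    moreover have "?P dvd t * (\<Prod>j=1..n. L j)"
      using \<open>i \<le> n\<close> by (intro dvd_mult prod_dvd_prod_subset) auto
    ultimately show ?thesis
      by simp
  qed
  ultimately show ?thesis
    using coprime[of i] by (cases "i = 0") (simp_all add: divides_mult)
qed

lemma chair_weight_sum_carries:
  fixes d L K :: "nat \<Rightarrow> int"
  assumes coprime: "\<And>i. 1 \<le> i \<Longrightarrow> coprime (\<Prod>j=1..i. L j) (\<Prod>j=Suc i..n. K j)"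
    and nonzero: "\<And>j. j \<in> {1..n} \<Longrightarrow> L j \<noteq> 0 \<and> K j \<noteq> 0"
    and sum: "(\<Sum>j=1..n. d j * chair_weight L K n j) = ((\<Prod>j=1..n. L j) - (\<Prod>j=1..n. K j)) * t"
  obtains a where "a 0 = t" "a n = t" "\<And>j. j \<in> {1..n} \<Longrightarrow> d j = L j * a j - K j * a (j - 1)"
proof -
  define A where "A i = t * (\<Prod>j=1..n. K j) + (\<Sum>j=1..i. d j * chair_weight L K n j)" for i
  define a where "a i = A i div ((\<Prod>j=1..i. L j) * (\<Prod>j=Suc i..n. K j))" for i
  have A_eq: "A i = a i * ((\<Prod>j=1..i. L j) * (\<Prod>j=Suc i..n. K j))" if "i \<le> n" for i
    using partial_chair_weight_sum_dvd[OF coprime sum that] unfolding a_def A_def by simp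
  have "a 0 = t"
    using A_eq[of 0] nonzero by (simp add: A_def)
  moreover have "a n = t"
  proof -
    have "(\<Prod>j=1..n. L j) \<noteq> 0"
      using nonzero by simp
    then show ?thesis
      using A_eq[of n] sum by (simp add: A_def algebra_simps)
  qed
  moreover have "d j = L j * a j - K j * a (j - 1)" if j: "j \<in> {1..n}" for j
  proof -
    have "A j = A (j - 1) + d j * chair_weight L K n j"
      using j sum.cl_ivl_Suc[of "\<lambda>j. d j * chair_weight L K n j" 1 "j - 1"] by (simp add: A_def)
    moreover have "A j = a j * (L j * chair_weight L K n j)"
      using j A_eq[of j] L_mult_chair_weight[of j L K n] by simp
    moreover have "A (j - 1) = a (j - 1) * (K j * chair_weight L K n j)"
      using j A_eq[of "j - 1"] K_mult_chair_weight[of j n K L] by force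
    ultimately have "d j * chair_weight L K n j = (L j * a j - K j * a (j - 1)) * chair_weight L K n j"
      by (simp add: algebra_simps)
    moreover have "chair_weight L K n j \<noteq> 0"
      using j nonzero by (auto simp: chair_weight_def)
    ultimately show ?thesis
      by simp
  qed
  ultimately show ?thesis
    using that by blast
qed

lemma backward_nondecreasing:
  fixes a :: "nat \<Rightarrow> int"
  assumes descent: "\<And>j. j \<in> {1..n} \<Longrightarrow> c \<le> a j \<Longrightarrow> a j \<le> a (j - 1)"
    and "i \<le> n" "c \<le> a i" "k \<le> i"
  shows "a i \<le> a k"
  using \<open>k \<le> i\<close>
proof (induction k rule: inc_induct)
  case base
  show ?case by simp
next
  case (step k)
  then show ?case
    using descent[of "Suc k"] \<open>i \<le> n\<close> \<open>c \<le> a i\<close> by fastforce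
qed

lemma cyclic_backward_constant:
  fixes a :: "nat \<Rightarrow> int"
  assumes descent: "\<And>j. j \<in> {1..n} \<Longrightarrow> c \<le> a j \<Longrightarrow> a j \<le> a (j - 1)"
    and cyclic: "a 0 = a n"
    and "i \<le> n" "c \<le> a i" "j \<le> n"
  shows "a j = a n"
proof -
  note backward = backward_nondecreasing[where a = a and n = n and c = c, OF descent]
  have "c \<le> a n"
    using backward[of i 0] \<open>i \<le> n\<close> \<open>c \<le> a i\<close> cyclic by simp
  then have "a n \<le> a j"
    using backward[of n j] \<open>j \<le> n\<close> by simp
  moreover have "a j \<le> a 0"
    using backward[of j 0] \<open>j \<le> n\<close> \<open>c \<le> a n\<close> calculation by simp
  ultimately show ?thesis
    using cyclic by simp
qed

lemma carries_nonpos: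
  fixes a d L K :: "nat \<Rightarrow> int"
  assumes cyclic: "a 0 = a n"
    and carry: "\<And>j. j \<in> {1..n} \<Longrightarrow> d j = L j * a j - K j * a (j - 1)"
    and bounds: "\<And>j. j \<in> {1..n} \<Longrightarrow> 0 \<le> K j \<and> K j \<le> L j \<and> d j < L j"
    and low: "j0 \<in> {1..n}" "d j0 < L j0 - K j0"
    and "i \<le> n"
  shows "a i \<le> 0"
proof (rule ccontr)
  assume "\<not> a i \<le> 0"
  have descent: "a j \<le> a (j - 1)" if j: "j \<in> {1..n}" and "1 \<le> a j" for j
  proof (rule ccontr)
    assume "\<not> a j \<le> a (j - 1)"
    then have "K j * a (j - 1) \<le> K j * (a j - 1)"
      using bounds[OF j] by (intro mult_left_mono) auto
    moreover have "0 \<le> (L j - K j) * (a j - 1)"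
      using bounds[OF j] \<open>1 \<le> a j\<close> by simp
    ultimately have "L j \<le> L j * a j - K j * a (j - 1)"
      by (simp add: algebra_simps)
    then show False
      using bounds[OF j] carry[OF j] by linarith
  qed
  have all_equal: "a j = a n" if "j \<le> n" for j
    using cyclic_backward_constant[OF descent cyclic \<open>i \<le> n\<close> _ that] \<open>\<not> a i \<le> 0\<close> by simp
  have "a j0 = a n"
    by (rule all_equal) (use low(1) in auto)
  moreover have "a (j0 - 1) = a n"
    by (rule all_equal) (use low(1) in auto)
  ultimately have "d j0 = (L j0 - K j0) * a n"
    using carry[OF low(1)] by (simp add: algebra_simps)
  moreover have "1 \<le> a n"
    using all_equal[OF \<open>i \<le> n\<close>] \<open>\<not> a i \<le> 0\<close> by simp
  moreover have "0 \<le> L j0 - K j0"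
    using bounds[OF low(1)] by simp
  ultimately show False
    using low(2) mult_left_mono[of 1 "a n" "L j0 - K j0"] by simp
qed

lemma chair_eq_of_carries:
  assumes X: "X \<in> chair n L K" and Y: "Y \<in> chair n L K"
    and KL: "\<forall>i\<in>{1..n}. 0 < K i \<and> K i < L i"
    and cyclic: "a 0 = a n"
    and carry: "\<And>j. j \<in> {1..n} \<Longrightarrow> X j - Y j = L j * a j - K j * a (j - 1)"
  shows "X = Y"
proof
  fix j
  show "X j = Y j"
  proof (cases "j \<in> {1..n}")
    case True
    obtain jX where jX: "jX \<in> {1..n}" "X jX < L jX - K jX"
      using X by (auto simp: chair_def)
    obtain jY where jY: "jY \<in> {1..n}" "Y jY < L jY - K jY"
      using Y by (auto simp: chair_def)
    have bounds: "0 \<le> K i \<and> K i \<le> L i \<and> 0 \<le> X i \<and> X i < L i \<and> 0 \<le> Y i \<and> Y i < L i"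
      if "i \<in> {1..n}" for i
      using KL X Y that unfolding chair_def by fastforce
    have XY_bounds: "0 \<le> K i \<and> K i \<le> L i \<and> X i - Y i < L i"
      and YX_bounds: "0 \<le> K i \<and> K i \<le> L i \<and> Y i - X i < L i"
      and YX_carry: "Y i - X i = L i * - a i - K i * - a (i - 1)"
      if "i \<in> {1..n}" for i
      using bounds[OF that] carry[OF that] by (auto simp: algebra_simps)
    have "X jX - Y jX < L jX - K jX" "Y jY - X jY < L jY - K jY"
      using bounds[OF jX(1)] bounds[OF jY(1)] jX(2) jY(2) by linarith+
    then have "a i \<le> 0" "- a i \<le> 0" if "i \<le> n" for i
      using carries_nonpos[OF cyclic carry XY_bounds jX(1) _ that]
        carries_nonpos[where a = "\<lambda>j. - a j", OF _ YX_carry YX_bounds jY(1) _ that] cyclic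
      by simp_all
    then have zero: "a i = 0" if "i \<le> n" for i
      using that by (meson order_antisym neg_le_0_iff_le)
    have "a j = 0" "a (j - 1) = 0"
      using True by (auto intro: zero)
    then show ?thesis
      using carry[OF True] by simp
  next
    case False
    then show ?thesis
      using X Y by (simp add: chair_def)
  qed
qed

lemma finite_chair: "finite (chair n L K)"
proof -
  let ?B = "\<Union>j\<in>{1..n}. {0..<L j}"
  have "X i \<in> ?B" if "X \<in> chair n L K" "i \<in> {1..n}" for X i
  proof -
    have "X i \<in> {0..<L i}"
      using that by (simp add: chair_def)
    then show ?thesis
      using that(2) by blast
  qed
  moreover have "X i = 0" if "X \<in> chair n L K" "i \<notin> {1..n}" for X i
    using that by (simp add: chair_def)
  ultimately have "chair n L K \<subseteq> {X. \<forall>i. (i \<in> {1..n} \<longrightarrow> X i \<in> ?B) \<and> (i \<notin> {1..n} \<longrightarrow> X i = 0)}"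
    by blast
  moreover have "finite {X. \<forall>i. (i \<in> {1..n} \<longrightarrow> X i \<in> ?B) \<and> (i \<notin> {1..n} \<longrightarrow> X i = 0)}"
    by (intro finite_set_of_finite_funs) auto
  ultimately show ?thesis
    by (rule finite_subset)
qed

lemma inj_on_dotG_beta_chair:
  fixes L K :: "nat \<Rightarrow> int" and n :: nat
  defines "m \<equiv> (\<Prod>j=1..n. L j) - (\<Prod>j=1..n. K j)"
  assumes KL: "\<forall>i\<in>{1..n}. 0 < K i \<and> K i < L i"
    and units: "\<forall>i\<in>{2..n}. coprime (K i) m"
  shows "inj_on (\<lambda>X. dotG m n X (beta m L K)) (chair n L K)"
proof (rule inj_onI)
  fix X Y
  assume X: "X \<in> chair n L K" and Y: "Y \<in> chair n L K"
    and "dotG m n X (beta m L K) = dotG m n Y (beta m L K)"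
  then have "[(\<Sum>i=1..n. X i * beta m L K i) = (\<Sum>i=1..n. Y i * beta m L K i)] (mod m)"
    by (simp add: dotG_def cong_def)
  then have scaled: "[(\<Sum>i=1..n. X i * beta m L K i) * (\<Prod>j=2..n. K j)
                      = (\<Sum>i=1..n. Y i * beta m L K i) * (\<Prod>j=2..n. K j)] (mod m)"
    by (rule cong_mult) (rule cong_refl)
  have "[(\<Sum>i=1..n. X i * chair_weight L K n i) = (\<Sum>i=1..n. Y i * chair_weight L K n i)] (mod m)"
    using cong_trans[OF cong_trans[OF cong_sym[OF dot_beta_mult_cong_chair_weight[OF units]] scaled]
        dot_beta_mult_cong_chair_weight[OF units]] .
  then have "m dvd (\<Sum>i=1..n. X i * chair_weight L K n i) - (\<Sum>i=1..n. Y i * chair_weight L K n i)"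
    by (simp add: cong_iff_dvd_diff)
  also have "(\<Sum>i=1..n. X i * chair_weight L K n i) - (\<Sum>i=1..n. Y i * chair_weight L K n i)
               = (\<Sum>i=1..n. (X i - Y i) * chair_weight L K n i)"
    by (simp add: sum_subtractf left_diff_distrib)
  finally obtain t where sum: "(\<Sum>i=1..n. (X i - Y i) * chair_weight L K n i)
                                 = ((\<Prod>j=1..n. L j) - (\<Prod>j=1..n. K j)) * t"
    unfolding m_def by (elim dvdE)
  have coprime: "coprime (\<Prod>j=1..i. L j) (\<Prod>j=Suc i..n. K j)" if "1 \<le> i" for i
    using coprime_prefix_suffix[OF units[unfolded m_def] that] .
  have nonzero: "\<And>j. j \<in> {1..n} \<Longrightarrow> L j \<noteq> 0 \<and> K j \<noteq> 0"
    using KL by force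
  obtain a where "a 0 = t" "a n = t"
    and carry: "\<And>j. j \<in> {1..n} \<Longrightarrow> X j - Y j = L j * a j - K j * a (j - 1)"
    using chair_weight_sum_carries[OF coprime nonzero sum] by blast
  then have "a 0 = a n"
    by simp
  from chair_eq_of_carries[OF X Y KL this carry] show "X = Y" .
qed

theorem mainTheorem2:
  fixes n :: nat and L K :: "nat \<Rightarrow> int"
  assumes "n \<ge> 2"
    and "\<forall>i\<in>{1..n}. 0 < K i \<and> K i < L i"
    and "\<forall>i\<in>{2..n}. \<exists>u. [K i * u = 1] (mod ((\<Prod>j=1..n. L j) - (\<Prod>j=1..n. K j)))"
  shows "splits (chair n L K) ((\<Prod>j=1..n. L j) - (\<Prod>j=1..n. K j)) n
           (beta ((\<Prod>j=1..n. L j) - (\<Prod>j=1..n. K j)) L K)"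
proof -
  have "\<forall>i\<in>{2..n}. coprime (K i) ((\<Prod>j=1..n. L j) - (\<Prod>j=1..n. K j))"
    using assms(3) by (simp add: coprime_iff_invertible_int)
  then show ?thesis
    unfolding splits_def
    using inj_on_dotG_beta_chair[OF assms(2)] by (simp add: finite_chair card_image)
qed

end
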